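(* Let $T:\mathbb{R}^n\to\mathbb{R}^n$ be topical. The set of additive eigenvectors of $T$ is nonempty and bounded in the variation norm if and only if $$r(T^J_{-\infty})<\lambda(T^{[n]\setminus J}_\infty)$$ for every nonempty proper subset $J\subset[n]$.
   Context: $T$ is topical if it is order-preserving ($x\le y\Rightarrow T(x)\le T(y)$, entrywise) and additively homogeneous ($T(x+c\mathbf{1})=T(x)+c\mathbf{1}$ for all $c\in\mathbb{R}$, $\mathbf{1}$ the all-ones vector). $x\in\mathbb{R}^n$ is an additive eigenvector if $T(x)=x+\lambda\mathbf{1}$ for some $\lambda\in\mathbb{R}$. Variation norm: $\|x\|_{\mathrm{var}}=\max_ix_i-\min_jx_j$. A topical $T$ extends continuously to order-preserving additively homogeneous maps on $(-\infty,\infty]^n$ and on $[-\infty,\infty)^n$, again denoted $T$. For $\alpha\in[-\infty,\infty]$, $P^J_\alpha(x)_j=x_j$ for $j\in J$ and $\alpha$ otherwise; $T^J_{-\infty}=P^J_{-\infty}TP^J_{-\infty}$ on $[-\infty,\infty)^n$ and $T^J_\infty=P^J_\infty TP^J_\infty$ on $(-\infty,\infty]^n$. For such maps $S$: $r(S)=\inf_{x\in\mathbb{R}^n}\max_i(S(x)_i-x_i)$ and $\lambda(S)=\sup_{x\in\mathbb{R}^n}\min_i(S(x)_i-x_i)$, with values in $[-\infty,\infty]$. *)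

theory Defs
  imports "HOL-Analysis.Analysis" "HOL-Library.Extended_Real"
begin

definition topical :: "(real^'n \<Rightarrow> real^'n) \<Rightarrow> bool" where
  "topical T \<longleftrightarrow>
     (\<forall>x y. (\<forall>i. x$i \<le> y$i) \<longrightarrow> (\<forall>i. T x $ i \<le> T y $ i)) \<and>
     (\<forall>x (c::real). T (\<chi> i. x$i + c) = (\<chi> i. T x $ i + c))"

definition additive_eigenvectors :: "(real^'n \<Rightarrow> real^'n) \<Rightarrow> (real^'n) set" where
  "additive_eigenvectors T = {x. \<exists>c::real. T x = (\<chi> i. x$i + c)}"

definition var_norm :: "real^'n \<Rightarrow> real" where
  "var_norm x = Max (range (\<lambda>i. x$i)) - Min (range (\<lambda>j. x$j))"

text \<open>Continuous extension of T to [-inf,inf)^n (monotone limit from above)\<close>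
definition ext_bot :: "(real^'n \<Rightarrow> real^'n) \<Rightarrow> ereal^'n \<Rightarrow> ereal^'n" where
  "ext_bot T x = (\<chi> i. INF y\<in>{y::real^'n. \<forall>j. x$j \<le> ereal (y$j)}. ereal (T y $ i))"

text \<open>Continuous extension of T to (-inf,inf]^n (monotone limit from below)\<close>
definition ext_top :: "(real^'n \<Rightarrow> real^'n) \<Rightarrow> ereal^'n \<Rightarrow> ereal^'n" where
  "ext_top T x = (\<chi> i. SUP y\<in>{y::real^'n. \<forall>j. ereal (y$j) \<le> x$j}. ereal (T y $ i))"

definition proj :: "'n set \<Rightarrow> ereal \<Rightarrow> ereal^'n \<Rightarrow> ereal^'n" where
  "proj J \<alpha> x = (\<chi> i. if i \<in> J then x$i else \<alpha>)"

definition T_bot :: "'n set \<Rightarrow> (real^'n \<Rightarrow> real^'n) \<Rightarrow> ereal^'n \<Rightarrow> ereal^'n" where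
  "T_bot J T x = proj J (-\<infinity>) (ext_bot T (proj J (-\<infinity>) x))"

definition T_top :: "'n set \<Rightarrow> (real^'n \<Rightarrow> real^'n) \<Rightarrow> ereal^'n \<Rightarrow> ereal^'n" where
  "T_top J T x = proj J \<infinity> (ext_top T (proj J \<infinity> x))"

definition embed :: "real^'n \<Rightarrow> ereal^'n" where
  "embed x = (\<chi> i. ereal (x$i))"

definition r_upper :: "(ereal^'n \<Rightarrow> ereal^'n) \<Rightarrow> ereal" where
  "r_upper S = (INF x\<in>(UNIV::(real^'n) set). Max (range (\<lambda>i. S (embed x) $ i - ereal (x$i))))"

definition lambda_lower :: "(ereal^'n \<Rightarrow> ereal^'n) \<Rightarrow> ereal" where
  "lambda_lower S = (SUP x\<in>(UNIV::(real^'n) set). Min (range (\<lambda>i. S (embed x) $ i - ereal (x$i))))"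

end

(*
  If J violates the gap condition, an eigenvalue c of T equals both r(T^J_{-inf}) and
  lambda(T^{[n]-J}_inf). Limits of eigenvectors of truncations of T to growing boxes then give a
  subeigenvector of some T^A_{-inf} and a supereigenvector of some T^B_inf, both for c, with A
  inside J and B outside it; squeezing an eigenvector between far-apart shifts of the two
  produces eigenvectors of arbitrarily large variation.

  Conversely, a gap for J gives a vector w with T w < w + a on J and T w > w + a off J.
  Comparing an eigenvector x with w at the extremal coordinates of w - x shows that x cannot
  drop by more than var(w) from J to its complement. Since this holds for every J, the
  variation of x is at most (n - 1) times a bound serving all J. The same bound applied to
  a Brouwer fixed point of T truncated to a large box shows that the truncation is inactive,
  so the fixed point is an eigenvector.
*)

theory Submission
  imports Defs
begin

section \<open>Topical maps\<close>

lemma topical_mono: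
  assumes "topical T" "\<And>i. x$i \<le> y$i"
  shows "T x $ k \<le> T y $ k"
  using assms unfolding topical_def by blast

lemma topical_add_const:
  assumes "topical T"
  shows "T (\<chi> i. x$i + c) $ k = T x $ k + c"
  using assms unfolding topical_def by simp

lemma topical_le_add_const:
  assumes "topical T" "\<And>i. x$i \<le> y$i + d"
  shows "T x $ k \<le> T y $ k + d"
proof -
  have "T x $ k \<le> T (\<chi> i. y$i + d) $ k"
    using topical_mono[OF assms(1)] assms(2) by simp
  then show ?thesis
    using topical_add_const[OF assms(1)] by simp
qed

lemma topical_add_const_le:
  assumes "topical T" "\<And>i. y$i + d \<le> x$i"
  shows "T y $ k + d \<le> T x $ k"
proof -
  have "y$i \<le> x$i + - d" for i
    using assms(2)[of i] by linarith
  then have "T y $ k \<le> T x $ k + - d"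
    by (rule topical_le_add_const[OF assms(1)])
  then show ?thesis
    by simp
qed

lemma topical_nonexpansive:
  assumes "topical T"
  shows "\<bar>T x $ k - T y $ k\<bar> \<le> norm (x - y)"
proof -
  have "x$i \<le> y$i + norm (x - y)" "y$i \<le> x$i + norm (x - y)" for i
    using component_le_norm_cart[of "x - y" i] by auto
  then have "T x $ k \<le> T y $ k + norm (x - y)" "T y $ k \<le> T x $ k + norm (x - y)"
    by (simp_all add: topical_le_add_const[OF assms])
  then show ?thesis
    by linarith
qed

lemma topical_continuous_on:
  assumes "topical T"
  shows "continuous_on S (\<lambda>x. T x $ k)"
proof -
  have "1-lipschitz_on S (\<lambda>x. T x $ k)"
    using topical_nonexpansive[OF assms] by (intro lipschitz_onI) (auto simp: dist_norm)
  then show ?thesis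
    by (rule lipschitz_on_continuous_on)
qed

lemma continuous_on_Max:
  fixes f :: "'i \<Rightarrow> 'a::topological_space \<Rightarrow> 'b::linorder_topology"
  assumes "finite K" "K \<noteq> {}" "\<And>k. k \<in> K \<Longrightarrow> continuous_on S (f k)"
  shows "continuous_on S (\<lambda>x. Max ((\<lambda>k. f k x) ` K))"
  using assms
proof (induction K rule: finite_ne_induct)
  case (insert k K)
  then show ?case
    by (simp add: continuous_on_max)
qed simp

lemma var_norm_le_iff: "var_norm x \<le> C \<longleftrightarrow> (\<forall>i j. x$i - x$j \<le> C)"
proof -
  have "Max (range (\<lambda>i. x$i)) \<in> range (\<lambda>i. x$i)" "Min (range (\<lambda>j. x$j)) \<in> range (\<lambda>j. x$j)"
    by (intro Max_in Min_in; simp)+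
  then obtain i j where "Max (range (\<lambda>i. x$i)) = x$i" "Min (range (\<lambda>j. x$j)) = x$j"
    by (metis rangeE)
  moreover have "x$a \<le> Max (range (\<lambda>i. x$i))" "Min (range (\<lambda>j. x$j)) \<le> x$b" for a b
    by simp_all
  ultimately show ?thesis
    unfolding var_norm_def by (smt (verit))
qed

lemma var_norm_ge: "x$i - x$j \<le> var_norm x"
  using var_norm_le_iff by blast

lemma topical_truncated_eigenvector:
  fixes T :: "real^'n \<Rightarrow> real^'n"
  assumes T: "topical T" and K: "K \<noteq> {}" and R: "0 < R"
  obtains x M where "\<And>k. k \<notin> K \<Longrightarrow> x$k = -R" "\<And>k. -R \<le> x$k" "\<And>k. x$k \<le> 0"
    "\<exists>k\<in>K. x$k = 0" "\<And>k. k \<in> K \<Longrightarrow> T x $ k \<le> x$k + M"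
    "\<And>k. k \<in> K \<Longrightarrow> -R < x$k \<Longrightarrow> T x $ k = x$k + M"
proof -
  define lo :: "real^'n" where "lo = (\<chi> k. -R)"
  define peak where "peak x = Max ((\<lambda>k. T x $ k) ` K)" for x
  \<comment> \<open>the normalisation keeps a coordinate at 0, the clamp at \<open>-R\<close> keeps the box invariant\<close>
  define F where "F x = (\<chi> k. if k \<in> K then max (T x $ k - peak x) (-R) else -R)" for x
  have peak_ge: "T x $ k \<le> peak x" if "k \<in> K" for x k
    unfolding peak_def using that by simp
  have "continuous_on (cbox lo 0) peak"
    unfolding peak_def using K topical_continuous_on[OF T] by (intro continuous_on_Max) auto
  then have "continuous_on (cbox lo 0) F"
    unfolding F_def
  proof (intro continuous_on_vec_lambda)
    fix k
    assume "continuous_on (cbox lo 0) peak"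
    then show "continuous_on (cbox lo 0) (\<lambda>x. if k \<in> K then max (T x $ k - peak x) (-R) else -R)"
      by (cases "k \<in> K")
        (simp_all add: continuous_on_max continuous_on_diff topical_continuous_on[OF T])
  qed
  moreover have "F \<in> cbox lo 0 \<rightarrow> cbox lo 0"
    using peak_ge R by (auto simp: F_def lo_def mem_box_cart)
  moreover have "lo \<in> cbox lo 0"
    using R by (simp add: lo_def mem_box_cart)
  ultimately obtain x where x: "x \<in> cbox lo 0" "F x = x"
    using brouwer[OF compact_cbox convex_box(1)] by blast
  have xk: "x$k = (if k \<in> K then max (T x $ k - peak x) (-R) else -R)" for k
  proof -
    have "x$k = F x $ k"
      using x(2) by simp
    then show ?thesis
      by (simp add: F_def)
  qed
  have "peak x \<in> (\<lambda>k. T x $ k) ` K"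
    unfolding peak_def using K by (intro Max_in) auto
  then obtain k0 where "k0 \<in> K" "T x $ k0 = peak x"
    by auto
  then have "\<exists>k\<in>K. x$k = 0"
    using xk[of k0] R by auto
  moreover have "-R \<le> x$k" "x$k \<le> 0" for k
    using x(1) by (auto simp: lo_def mem_box_cart)
  ultimately show thesis
    using xk peak_ge by (intro that[of x "peak x"]) (auto simp: max_def split: if_splits)
qed

lemma topical_eigenvector_between:
  fixes T :: "real^'n \<Rightarrow> real^'n"
  assumes T: "topical T" and "\<And>i. a$i \<le> b$i"
    and sub: "\<And>i. a$i + c \<le> T a $ i" and super: "\<And>i. T b $ i \<le> b$i + c"
  obtains e where "\<And>i. a$i \<le> e$i" "\<And>i. e$i \<le> b$i" "T e = (\<chi> i. e$i + c)"
proof -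
  define F where "F x = (\<chi> k. T x $ k - c)" for x
  have "continuous_on (cbox a b) F"
    unfolding F_def using topical_continuous_on[OF T]
    by (intro continuous_on_vec_lambda continuous_on_diff) auto
  moreover have "F \<in> cbox a b \<rightarrow> cbox a b"
  proof
    fix x assume "x \<in> cbox a b"
    then have mono: "T a $ i \<le> T x $ i" "T x $ i \<le> T b $ i" for i
      using topical_mono[OF T] by (auto simp: mem_box_cart)
    have "a$i \<le> T x $ i - c \<and> T x $ i - c \<le> b$i" for i
      using mono[of i] sub[of i] super[of i] by linarith
    then show "F x \<in> cbox a b"
      by (simp add: F_def mem_box_cart)
  qed
  moreover have "a \<in> cbox a b"
    using assms(2) by (simp add: mem_box_cart)
  ultimately obtain e where e: "e \<in> cbox a b" "F e = e"
    using brouwer[OF compact_cbox convex_box(1)] by blast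
  have "T e $ i = e$i + c" for i
  proof -
    have "e$i = F e $ i"
      using e(2) by simp
    then show ?thesis
      by (simp add: F_def)
  qed
  then show thesis
    using e(1) by (intro that[of e]) (auto simp: mem_box_cart vec_eq_iff)
qed

section \<open>The extended maps at real points\<close>

lemma T_bot_embed:
  "T_bot K T (embed x) $ i =
     (if i \<in> K then (INF y\<in>{y. \<forall>j\<in>K. x$j \<le> y$j}. ereal (T y $ i)) else -\<infinity>)"
proof -
  have "{y. \<forall>j. proj K (-\<infinity>) (embed x) $ j \<le> ereal (y$j)} = {y. \<forall>j\<in>K. x$j \<le> y$j}"
    unfolding proj_def embed_def by auto
  then show ?thesis
    unfolding T_bot_def ext_bot_def by (simp add: proj_def)
qed

lemma T_top_embed:
  "T_top L T (embed x) $ i =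
     (if i \<in> L then (SUP y\<in>{y. \<forall>j\<in>L. y$j \<le> x$j}. ereal (T y $ i)) else \<infinity>)"
proof -
  have "{y. \<forall>j. ereal (y$j) \<le> proj L \<infinity> (embed x) $ j} = {y. \<forall>j\<in>L. y$j \<le> x$j}"
    unfolding proj_def embed_def by auto
  then show ?thesis
    unfolding T_top_def ext_top_def by (simp add: proj_def)
qed

lemma r_upper_T_bot_lessE:
  fixes T :: "real^'n \<Rightarrow> real^'n"
  assumes "topical T" "r_upper (T_bot K T) < ereal a"
  obtains x s where "\<And>y i. (\<forall>j\<in>K. y$j = x$j) \<Longrightarrow> (\<forall>j. j \<notin> K \<longrightarrow> y$j \<le> s) \<Longrightarrow> i \<in> K \<Longrightarrow>
    T y $ i < y$i + a"
proof -
  obtain x where "Max (range (\<lambda>i. T_bot K T (embed x) $ i - ereal (x$i))) < ereal a"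
    using assms(2) unfolding r_upper_def by (auto simp: INF_less_iff)
  then have less: "T_bot K T (embed x) $ i - ereal (x$i) < ereal a" for i
    by (simp add: Max_less_iff)
  then have "(INF y\<in>{y. \<forall>j\<in>K. x$j \<le> y$j}. ereal (T y $ i)) < ereal (x$i + a)" if "i \<in> K" for i
    using less[of i] that by (simp add: T_bot_embed ereal_minus_less add.commute)
  then have "\<exists>y. (\<forall>j\<in>K. x$j \<le> y$j) \<and> T y $ i < x$i + a" if "i \<in> K" for i
    using that by (auto simp: INF_less_iff)
  then obtain Y where Y: "\<And>i j. i \<in> K \<Longrightarrow> j \<in> K \<Longrightarrow> x$j \<le> Y i $ j"
      "\<And>i. i \<in> K \<Longrightarrow> T (Y i) $ i < x$i + a"
    by metis
  define s where "s = - (\<Sum>i\<in>K. norm (Y i))"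
  have s: "s \<le> Y i $ j" if "i \<in> K" for i j
  proof -
    have "norm (Y i) \<le> (\<Sum>i\<in>K. norm (Y i))"
      using that by (intro member_le_sum) auto
    then show ?thesis
      unfolding s_def using component_le_norm_cart[of "Y i" j] by linarith
  qed
  show thesis
  proof (rule that[of x s])
    fix y i
    assume "\<forall>j\<in>K. y$j = x$j" "\<forall>j. j \<notin> K \<longrightarrow> y$j \<le> s" "i \<in> K"
    then have "y$j \<le> Y i $ j" for j
      using Y(1)[of i j] s[of i j] by (cases "j \<in> K") auto
    then have "T y $ i \<le> T (Y i) $ i"
      by (rule topical_mono[OF assms(1)])
    then show "T y $ i < y$i + a"
      using Y(2) \<open>i \<in> K\<close> \<open>\<forall>j\<in>K. y$j = x$j\<close> by fastforce
  qed
qed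

lemma lambda_lower_T_top_greaterE:
  fixes T :: "real^'n \<Rightarrow> real^'n"
  assumes "topical T" "ereal a < lambda_lower (T_top L T)"
  obtains z s where "\<And>y i. (\<forall>j\<in>L. y$j = z$j) \<Longrightarrow> (\<forall>j. j \<notin> L \<longrightarrow> s \<le> y$j) \<Longrightarrow> i \<in> L \<Longrightarrow>
    y$i + a < T y $ i"
proof -
  obtain z where "ereal a < Min (range (\<lambda>i. T_top L T (embed z) $ i - ereal (z$i)))"
    using assms(2) unfolding lambda_lower_def by (auto simp: less_SUP_iff)
  then have greater: "ereal a < T_top L T (embed z) $ i - ereal (z$i)" for i
    by (simp add: Min_gr_iff)
  then have "ereal (z$i + a) < (SUP y\<in>{y. \<forall>j\<in>L. y$j \<le> z$j}. ereal (T y $ i))" if "i \<in> L" for i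
    using greater[of i] that by (simp add: T_top_embed ereal_less_minus add.commute)
  then have "\<exists>y. (\<forall>j\<in>L. y$j \<le> z$j) \<and> z$i + a < T y $ i" if "i \<in> L" for i
    using that by (auto simp: less_SUP_iff)
  then obtain Y where Y: "\<And>i j. i \<in> L \<Longrightarrow> j \<in> L \<Longrightarrow> Y i $ j \<le> z$j"
      "\<And>i. i \<in> L \<Longrightarrow> z$i + a < T (Y i) $ i"
    by metis
  define s where "s = (\<Sum>i\<in>L. norm (Y i))"
  have s: "Y i $ j \<le> s" if "i \<in> L" for i j
  proof -
    have "norm (Y i) \<le> (\<Sum>i\<in>L. norm (Y i))"
      using that by (intro member_le_sum) auto
    then show ?thesis
      unfolding s_def using component_le_norm_cart[of "Y i" j] by linarith
  qed
  show thesis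
  proof (rule that[of z s])
    fix y i
    assume "\<forall>j\<in>L. y$j = z$j" "\<forall>j. j \<notin> L \<longrightarrow> s \<le> y$j" "i \<in> L"
    then have "Y i $ j \<le> y$j" for j
      using Y(1)[of i j] s[of i j] by (cases "j \<in> L") auto
    then have "T (Y i) $ i \<le> T y $ i"
      by (rule topical_mono[OF assms(1)])
    then show "y$i + a < T y $ i"
      using Y(2) \<open>i \<in> L\<close> \<open>\<forall>j\<in>L. y$j = z$j\<close> by fastforce
  qed
qed

lemma r_upper_T_bot_geD:
  assumes "ereal c \<le> r_upper (T_bot K T)"
  shows "\<exists>i\<in>K. x$i + c \<le> T x $ i"
proof -
  have "ereal c \<le> Max (range (\<lambda>i. T_bot K T (embed x) $ i - ereal (x$i)))"
    using assms unfolding r_upper_def by (auto simp: le_INF_iff)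
  then obtain i where i: "ereal c \<le> T_bot K T (embed x) $ i - ereal (x$i)"
    by (auto simp: Max_ge_iff)
  then have "i \<in> K"
    by (auto simp: T_bot_embed split: if_splits)
  then have "ereal (x$i + c) \<le> (INF y\<in>{y. \<forall>j\<in>K. x$j \<le> y$j}. ereal (T y $ i))"
    using i by (simp add: T_bot_embed ereal_le_minus add.commute)
  also have "\<dots> \<le> ereal (T x $ i)"
    by (rule INF_lower) simp
  finally show ?thesis
    using \<open>i \<in> K\<close> by auto
qed

lemma lambda_lower_T_top_leD:
  assumes "lambda_lower (T_top L T) \<le> ereal c"
  shows "\<exists>i\<in>L. T x $ i \<le> x$i + c"
proof -
  have "Min (range (\<lambda>i. T_top L T (embed x) $ i - ereal (x$i))) \<le> ereal c"
    using assms unfolding lambda_lower_def by (auto simp: SUP_le_iff)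
  then obtain i where i: "T_top L T (embed x) $ i - ereal (x$i) \<le> ereal c"
    by (auto simp: Min_le_iff)
  then have "i \<in> L"
    by (auto simp: T_top_embed split: if_splits)
  have "ereal (T x $ i) \<le> (SUP y\<in>{y. \<forall>j\<in>L. y$j \<le> x$j}. ereal (T y $ i))"
    by (rule SUP_upper) simp
  also have "\<dots> \<le> ereal (x$i + c)"
    using i \<open>i \<in> L\<close> by (simp add: T_top_embed ereal_minus_le add.commute)
  finally show ?thesis
    using \<open>i \<in> L\<close> by auto
qed

lemma r_upper_T_bot_le_eigenvalue:
  assumes "T u = (\<chi> i. u$i + c)"
  shows "r_upper (T_bot K T) \<le> ereal c"
proof -
  have "T_bot K T (embed u) $ i - ereal (u$i) \<le> ereal c" for i
  proof (cases "i \<in> K")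
    case True
    have "(INF y\<in>{y. \<forall>j\<in>K. u$j \<le> y$j}. ereal (T y $ i)) \<le> ereal (T u $ i)"
      by (rule INF_lower) simp
    then show ?thesis
      using True assms by (simp add: T_bot_embed ereal_minus_le add.commute)
  qed (simp add: T_bot_embed)
  then have "Max (range (\<lambda>i. T_bot K T (embed u) $ i - ereal (u$i))) \<le> ereal c"
    by (simp add: Max_le_iff)
  then show ?thesis
    unfolding r_upper_def by (meson INF_lower2 UNIV_I)
qed

lemma eigenvalue_le_lambda_lower_T_top:
  assumes "T u = (\<chi> i. u$i + c)"
  shows "ereal c \<le> lambda_lower (T_top L T)"
proof -
  have "ereal c \<le> T_top L T (embed u) $ i - ereal (u$i)" for i
  proof (cases "i \<in> L")
    case True
    have "ereal (T u $ i) \<le> (SUP y\<in>{y. \<forall>j\<in>L. y$j \<le> u$j}. ereal (T y $ i))"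
      by (rule SUP_upper) simp
    then show ?thesis
      using True assms by (simp add: T_top_embed ereal_le_minus add.commute)
  qed (simp add: T_top_embed)
  then have "ereal c \<le> Min (range (\<lambda>i. T_top L T (embed u) $ i - ereal (u$i)))"
    by (simp add: Min_ge_iff)
  then show ?thesis
    unfolding lambda_lower_def by (meson SUP_upper2 UNIV_I)
qed

section \<open>Sufficiency of the gap condition\<close>

lemma separating_vector_of_spectral_gap:
  fixes T :: "real^'n \<Rightarrow> real^'n"
  assumes T: "topical T" and gap: "r_upper (T_bot J T) < lambda_lower (T_top (UNIV - J) T)"
  obtains w a where "\<And>i. i \<in> J \<Longrightarrow> T w $ i < w$i + a" "\<And>i. i \<notin> J \<Longrightarrow> w$i + a < T w $ i"
proof -
  obtain a where a: "r_upper (T_bot J T) < ereal a" "ereal a < lambda_lower (T_top (UNIV - J) T)"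
    using ereal_dense2[OF gap] by blast
  obtain x s where x: "\<And>y i. (\<forall>j\<in>J. y$j = x$j) \<Longrightarrow> (\<forall>j. j \<notin> J \<longrightarrow> y$j \<le> s) \<Longrightarrow> i \<in> J \<Longrightarrow>
      T y $ i < y$i + a"
    using r_upper_T_bot_lessE[OF T a(1)] by blast
  obtain z s' where z: "\<And>y i. (\<forall>j\<in>UNIV - J. y$j = z$j) \<Longrightarrow> (\<forall>j. j \<notin> UNIV - J \<longrightarrow> s' \<le> y$j) \<Longrightarrow>
      i \<in> UNIV - J \<Longrightarrow> y$i + a < T y $ i"
    using lambda_lower_T_top_greaterE[OF T a(2)] by blast
  define t where "t = norm x + norm z + \<bar>s\<bar> + \<bar>s'\<bar>"
  have t: "\<bar>x$k\<bar> + \<bar>z$k\<bar> + \<bar>s\<bar> + \<bar>s'\<bar> \<le> t" for k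
    using component_le_norm_cart[of x k] component_le_norm_cart[of z k] unfolding t_def by linarith
  define w where "w = (\<chi> k. if k \<in> J then x$k else z$k - t)"
  show thesis
  proof (rule that[of w a])
    fix i
    assume "i \<in> J"
    have "w$j \<le> s" if "j \<notin> J" for j
      using that t[of j] by (simp add: w_def)
    with \<open>i \<in> J\<close> show "T w $ i < w$i + a"
      by (intro x) (simp_all add: w_def)
  next
    fix i
    assume "i \<notin> J"
    have "s' \<le> w$j + t" if "j \<in> J" for j
      using that t[of j] by (simp add: w_def)
    with \<open>i \<notin> J\<close> have "(\<chi> k. w$k + t) $ i + a < T (\<chi> k. w$k + t) $ i"
      by (intro z) (simp_all add: w_def)
    then show "w$i + a < T w $ i"
      by (simp add: topical_add_const[OF T])
  qed
qed

lemma separating_vector_bounds_gap: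
  fixes T :: "real^'n \<Rightarrow> real^'n"
  assumes T: "topical T" and J: "J \<noteq> {}" "J \<noteq> UNIV"
    and w: "\<And>i. i \<in> J \<Longrightarrow> T w $ i < w$i + a" "\<And>i. i \<notin> J \<Longrightarrow> w$i + a < T w $ i"
    and x: "\<And>i. i \<in> J \<Longrightarrow> x$i + M \<le> T x $ i" "\<And>i. i \<notin> J \<Longrightarrow> T x $ i \<le> x$i + M"
  shows "\<exists>i\<in>J. \<exists>j. j \<notin> J \<and> x$i - x$j \<le> w$i - w$j"
proof -
  define d where "d k = w$k - x$k" for k
  obtain i0 where i0: "\<And>k. d k \<le> d i0"
    using ex_is_arg_min_if_finite[of UNIV "\<lambda>k. - d k"] by (auto simp: is_arg_min_linorder)
  obtain i1 where i1: "\<And>k. d i1 \<le> d k"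
    using ex_is_arg_min_if_finite[of UNIV d] by (auto simp: is_arg_min_linorder)
  have "i0 \<in> J \<or> i1 \<notin> J"
  proof (rule ccontr)
    assume "\<not> (i0 \<in> J \<or> i1 \<notin> J)"
    then have "i0 \<notin> J" "i1 \<in> J"
      by auto
    have "w$k \<le> x$k + d i0" for k
      using i0[of k] by (simp add: d_def)
    then have "T w $ i0 \<le> T x $ i0 + d i0"
      by (rule topical_le_add_const[OF T])
    then have "a < M"
      using w(2)[OF \<open>i0 \<notin> J\<close>] x(2)[OF \<open>i0 \<notin> J\<close>] by (simp add: d_def)
    have "x$k + d i1 \<le> w$k" for k
      using i1[of k] by (simp add: d_def)
    then have "T x $ i1 + d i1 \<le> T w $ i1"
      by (rule topical_add_const_le[OF T])
    then have "M < a"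
      using w(1)[OF \<open>i1 \<in> J\<close>] x(1)[OF \<open>i1 \<in> J\<close>] by (simp add: d_def)
    with \<open>a < M\<close> show False
      by simp
  qed
  then show ?thesis
  proof
    assume "i0 \<in> J"
    obtain j where "j \<notin> J"
      using J(2) by blast
    moreover have "x$i0 - x$j \<le> w$i0 - w$j"
      using i0[of j] by (simp add: d_def)
    ultimately show ?thesis
      using \<open>i0 \<in> J\<close> by blast
  next
    assume "i1 \<notin> J"
    obtain i where "i \<in> J"
      using J(1) by blast
    moreover have "x$i - x$i1 \<le> w$i - w$i1"
      using i1[of i] by (simp add: d_def)
    ultimately show ?thesis
      using \<open>i1 \<notin> J\<close> by blast
  qed
qed

definition gap_bound :: "(real^'n \<Rightarrow> real^'n) \<Rightarrow> real \<Rightarrow> bool" where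
  "gap_bound T G \<longleftrightarrow> (\<forall>J x M. J \<noteq> {} \<longrightarrow> J \<noteq> UNIV \<longrightarrow>
     (\<forall>i\<in>J. x$i + M \<le> T x $ i) \<longrightarrow> (\<forall>i. i \<notin> J \<longrightarrow> T x $ i \<le> x$i + M) \<longrightarrow>
     (\<exists>i\<in>J. \<exists>j. j \<notin> J \<and> x$i - x$j \<le> G))"

lemma gap_boundD:
  assumes "gap_bound T G" "J \<noteq> {}" "J \<noteq> UNIV"
    "\<And>i. i \<in> J \<Longrightarrow> x$i + M \<le> T x $ i" "\<And>i. i \<notin> J \<Longrightarrow> T x $ i \<le> x$i + M"
  shows "\<exists>i\<in>J. \<exists>j. j \<notin> J \<and> x$i - x$j \<le> G"
  using assms unfolding gap_bound_def by blast

lemma uniform_gap_bound: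
  fixes T :: "real^'n \<Rightarrow> real^'n"
  assumes T: "topical T"
    and gaps: "\<And>J. J \<noteq> {} \<Longrightarrow> J \<noteq> UNIV \<Longrightarrow> r_upper (T_bot J T) < lambda_lower (T_top (UNIV - J) T)"
  obtains G where "0 \<le> G" "gap_bound T G"
proof -
  have "\<exists>w a. J \<noteq> {} \<and> J \<noteq> UNIV \<longrightarrow>
      (\<forall>i\<in>J. T w $ i < w$i + a) \<and> (\<forall>i. i \<notin> J \<longrightarrow> w$i + a < T w $ i)" for J
    by (metis separating_vector_of_spectral_gap[OF T gaps])
  then obtain W A where WA: "\<And>J. J \<noteq> {} \<Longrightarrow> J \<noteq> UNIV \<Longrightarrow>
      (\<forall>i\<in>J. T (W J) $ i < W J $ i + A J) \<and> (\<forall>i. i \<notin> J \<longrightarrow> W J $ i + A J < T (W J) $ i)"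
    by metis
  define G where "G = (\<Sum>J\<in>UNIV. var_norm (W J))"
  have nonneg: "0 \<le> var_norm (W J)" for J
    using var_norm_ge[of "W J" undefined undefined] by simp
  have "var_norm (W J) \<le> G" for J
    unfolding G_def using nonneg by (intro member_le_sum) auto
  show thesis
  proof (rule that)
    show "0 \<le> G"
      unfolding G_def using nonneg by (intro sum_nonneg) auto
  next
    show "gap_bound T G"
      unfolding gap_bound_def
    proof (intro allI impI)
      fix J x M
      assume J: "J \<noteq> {}" "J \<noteq> UNIV"
        and "\<forall>i\<in>J. x$i + M \<le> T x $ i" "\<forall>i. i \<notin> J \<longrightarrow> T x $ i \<le> x$i + M"
      then obtain i j where "i \<in> J" "j \<notin> J" "x$i - x$j \<le> W J $ i - W J $ j"
        using separating_vector_bounds_gap[OF T J, of "W J" "A J" x M] WA[OF J] by blast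
      moreover have "W J $ i - W J $ j \<le> G"
        using var_norm_ge[of "W J" i j] \<open>var_norm (W J) \<le> G\<close> by linarith
      ultimately show "\<exists>i\<in>J. \<exists>j. j \<notin> J \<and> x$i - x$j \<le> G"
        by force
    qed
  qed
qed

lemma card_sublevel_set_gt:
  fixes x :: "real^'n"
  assumes G: "0 \<le> G" and gaps: "\<And>J. J \<noteq> {} \<Longrightarrow> J \<noteq> UNIV \<Longrightarrow> \<exists>i\<in>J. \<exists>j. j \<notin> J \<and> x$i - x$j \<le> G"
    and "k < CARD('n)"
  shows "k < card {l. x$l \<le> x$j + real k * G}"
  using \<open>k < CARD('n)\<close>
proof (induction k)
  case 0
  have "j \<in> {l. x$l \<le> x$j + real 0 * G}"
    by simp
  then show ?case
    by (auto simp: card_gt_0_iff)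
next
  case (Suc k)
  define S where "S k = {l. x$l \<le> x$j + real k * G}" for k
  have "S k \<subseteq> S (Suc k)"
    unfolding S_def using G by (auto simp: algebra_simps intro: order_trans)
  moreover have "S k \<noteq> S (Suc k)" if proper: "S k \<noteq> UNIV"
  proof -
    have "j \<in> S k"
      using G by (simp add: S_def)
    then obtain h l where "h \<notin> S k" "l \<in> S k" "x$h - x$l \<le> G"
      using gaps[of "UNIV - S k"] proper by blast
    then have "h \<in> S (Suc k) - S k"
      by (auto simp: S_def algebra_simps)
    then show ?thesis
      by blast
  qed
  ultimately have "card (S k) < card (S (Suc k)) \<or> S (Suc k) = UNIV"
    by (metis psubset_card_mono finite top.extremum_uniqueI psubsetI)
  then show ?case
    using Suc by (auto simp: S_def)
qed

lemma var_norm_le_if_gaps_le: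
  fixes x :: "real^'n"
  assumes G: "0 \<le> G" and gaps: "\<And>J. J \<noteq> {} \<Longrightarrow> J \<noteq> UNIV \<Longrightarrow> \<exists>i\<in>J. \<exists>j. j \<notin> J \<and> x$i - x$j \<le> G"
  shows "var_norm x \<le> (real CARD('n) - 1) * G"
  unfolding var_norm_le_iff
proof (intro allI)
  fix i j
  define S where "S = {l. x$l \<le> x$j + real (CARD('n) - 1) * G}"
  have "CARD('n) - 1 < card S"
    unfolding S_def by (rule card_sublevel_set_gt[OF G gaps]) simp_all
  then have "S = UNIV"
    by (metis Suc_pred' card_eq_UNIV_imp_eq_UNIV card_mono finite le_antisym less_eq_Suc_le
        subset_UNIV zero_less_card_finite)
  then have "x$i \<le> x$j + real (CARD('n) - 1) * G"
    by (auto simp: S_def)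
  then show "x$i - x$j \<le> (real CARD('n) - 1) * G"
    by (simp add: of_nat_diff)
qed

lemma eigenvector_var_norm_le:
  fixes T :: "real^'n \<Rightarrow> real^'n"
  assumes G: "0 \<le> G" and bound: "gap_bound T G" and x: "x \<in> additive_eigenvectors T"
  shows "var_norm x \<le> (real CARD('n) - 1) * G"
proof -
  obtain c where c: "T x = (\<chi> i. x$i + c)"
    using x unfolding additive_eigenvectors_def by blast
  have "\<exists>i\<in>J. \<exists>j. j \<notin> J \<and> x$i - x$j \<le> G" if "J \<noteq> {}" "J \<noteq> UNIV" for J
    using bound that by (rule gap_boundD[where M = c]) (simp_all add: c)
  then show ?thesis
    by (rule var_norm_le_if_gaps_le[OF G])
qed

lemma truncated_eigenvector_var_norm_le:
  fixes T :: "real^'n \<Rightarrow> real^'n"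
  assumes G: "0 \<le> G" and bound: "gap_bound T G"
    and floor: "\<And>k. lo \<le> x$k" and super: "\<And>k. T x $ k \<le> x$k + M"
    and sub: "\<And>k. lo < x$k \<Longrightarrow> x$k + M \<le> T x $ k"
  shows "var_norm x \<le> (real CARD('n) - 1) * G"
proof (rule var_norm_le_if_gaps_le[OF G])
  fix J :: "'n set"
  assume J: "J \<noteq> {}" "J \<noteq> UNIV"
  show "\<exists>i\<in>J. \<exists>j. j \<notin> J \<and> x$i - x$j \<le> G"
  proof (cases "\<forall>i\<in>J. lo < x$i")
    case True
    show ?thesis
      by (rule gap_boundD[OF bound J]) (use True sub super in auto)
  next
    case False
    then obtain i where "i \<in> J" "x$i \<le> lo"
      by force
    moreover obtain j where "j \<notin> J"
      using J(2) by blast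
    ultimately have "x$i - x$j \<le> G"
      using floor[of j] G by linarith
    with \<open>i \<in> J\<close> \<open>j \<notin> J\<close> show ?thesis
      by blast
  qed
qed

lemma eigenvector_exists_if_gap_bound:
  fixes T :: "real^'n \<Rightarrow> real^'n"
  assumes T: "topical T" and G: "0 \<le> G" and bound: "gap_bound T G"
  shows "additive_eigenvectors T \<noteq> {}"
proof -
  define R where "R = (real CARD('n) - 1) * G + 1"
  have "0 \<le> real CARD('n) - 1"
    by (simp add: Suc_leI)
  then have "0 \<le> (real CARD('n) - 1) * G"
    using G by (rule mult_nonneg_nonneg)
  then have "0 < R"
    unfolding R_def by linarith
  then obtain x M where "\<And>k. k \<notin> UNIV \<Longrightarrow> x$k = -R" "\<And>k. -R \<le> x$k" "\<And>k. x$k \<le> 0"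
      "\<exists>k\<in>UNIV. x$k = 0" "\<And>k. k \<in> UNIV \<Longrightarrow> T x $ k \<le> x$k + M"
      "\<And>k. k \<in> UNIV \<Longrightarrow> -R < x$k \<Longrightarrow> T x $ k = x$k + M"
    using topical_truncated_eigenvector[OF T UNIV_not_empty] by blast
  then have x: "\<And>k. -R \<le> x$k" "\<exists>k. x$k = 0" "\<And>k. T x $ k \<le> x$k + M"
      "\<And>k. -R < x$k \<Longrightarrow> T x $ k = x$k + M"
    by simp_all
  have "var_norm x < R"
    using truncated_eigenvector_var_norm_le[OF G bound x(1,3)] x(4) unfolding R_def by force
  have "-R < x$k" for k
  proof (rule ccontr)
    assume "\<not> -R < x$k"
    moreover obtain k0 where "x$k0 = 0"
      using x(2) by blast
    ultimately show False
      using var_norm_ge[of x k0 k] \<open>var_norm x < R\<close> by linarith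
  qed
  then have "T x = (\<chi> k. x$k + M)"
    using x(4) by (simp add: vec_eq_iff)
  then show ?thesis
    unfolding additive_eigenvectors_def by blast
qed

lemma bounded_eigenvectors_if_spectral_gaps:
  fixes T :: "real^'n \<Rightarrow> real^'n"
  assumes T: "topical T"
    and gaps: "\<And>J. J \<noteq> {} \<Longrightarrow> J \<noteq> UNIV \<Longrightarrow> r_upper (T_bot J T) < lambda_lower (T_top (UNIV - J) T)"
  shows "additive_eigenvectors T \<noteq> {} \<and> (\<exists>C. \<forall>x\<in>additive_eigenvectors T. var_norm x \<le> C)"
proof -
  obtain G where "0 \<le> G" "gap_bound T G"
    using uniform_gap_bound[OF T gaps] by blast
  then show ?thesis
    using eigenvector_exists_if_gap_bound[OF T] eigenvector_var_norm_le by blast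
qed

section \<open>Necessity of the gap condition\<close>

text \<open>\<open>subeigenvector_bot T A p c\<close> says \<open>p + c \<le> T^A_{-\<infinity>}(p)\<close> on \<open>A\<close>: the infimum defining
  the extension ranges over the \<open>y\<close> with \<open>y \<ge> p\<close> on \<open>A\<close>. Dually for \<open>supereigenvector_top\<close>.\<close>

definition subeigenvector_bot :: "(real^'n \<Rightarrow> real^'n) \<Rightarrow> 'n set \<Rightarrow> real^'n \<Rightarrow> real \<Rightarrow> bool" where
  "subeigenvector_bot T A p c \<longleftrightarrow> (\<forall>i\<in>A. \<forall>y. (\<forall>j\<in>A. p$j \<le> y$j) \<longrightarrow> p$i + c \<le> T y $ i)"

definition supereigenvector_top :: "(real^'n \<Rightarrow> real^'n) \<Rightarrow> 'n set \<Rightarrow> real^'n \<Rightarrow> real \<Rightarrow> bool" where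
  "supereigenvector_top T B q c \<longleftrightarrow> (\<forall>i\<in>B. \<forall>y. (\<forall>j\<in>B. y$j \<le> q$j) \<longrightarrow> T y $ i \<le> q$i + c)"

lemma bounded_above_seq_coordinatewise_subseq:
  fixes X :: "nat \<Rightarrow> real^'n"
  assumes "\<And>N k. X N $ k \<le> B"
  obtains r A p where "strict_mono r"
    "\<And>k. k \<in> A \<Longrightarrow> (\<lambda>m. X (r m) $ k) \<longlonglongrightarrow> p$k"
    "\<And>k. k \<notin> A \<Longrightarrow> filterlim (\<lambda>m. X (r m) $ k) at_bot sequentially"
proof -
  \<comment> \<open>\<open>exp\<close> compactifies \<open>[-\<infinity>, B]\<close>; coordinates whose limit is \<open>0\<close> diverge to \<open>-\<infinity>\<close>\<close>
  define E where "E N = (\<chi> k. exp (X N $ k))" for N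
  have "norm (E N) \<le> real CARD('n) * exp B" for N
  proof -
    have "norm (E N) \<le> (\<Sum>k\<in>UNIV. \<bar>E N $ k\<bar>)"
      by (rule norm_le_l1_cart)
    also have "\<dots> \<le> real CARD('n) * exp B"
      using assms by (intro sum_bounded_above[of UNIV _ "exp B", simplified]) (simp add: E_def)
    finally show ?thesis .
  qed
  then have "bounded (range E)"
    by (auto simp: bounded_iff)
  then obtain l r where r: "strict_mono r" and lim: "(E \<circ> r) \<longlonglongrightarrow> l"
    using bounded_imp_convergent_subsequence by blast
  have exp_lim: "(\<lambda>m. exp (X (r m) $ k)) \<longlonglongrightarrow> l$k" for k
    using tendsto_vec_nth[OF lim, of k] by (simp add: E_def o_def)
  show thesis
  proof (rule that[of r "{k. 0 < l$k}" "\<chi> k. ln (l$k)"])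
    show "strict_mono r"
      by (fact r)
  next
    fix k
    assume "k \<in> {k. 0 < l$k}"
    then have "(\<lambda>m. ln (exp (X (r m) $ k))) \<longlonglongrightarrow> ln (l$k)"
      by (intro tendsto_ln[OF exp_lim]) simp
    then show "(\<lambda>m. X (r m) $ k) \<longlonglongrightarrow> (\<chi> k. ln (l$k)) $ k"
      by simp
  next
    fix k
    assume "k \<notin> {k. 0 < l$k}"
    moreover have "0 \<le> l$k"
      by (rule LIMSEQ_le_const[OF exp_lim]) (auto intro: less_imp_le)
    ultimately have "(\<lambda>m. exp (X (r m) $ k)) \<longlonglongrightarrow> 0"
      using exp_lim[of k] by simp
    then have "filterlim (\<lambda>m. exp (X (r m) $ k)) (at_right 0) sequentially"
      by (rule tendsto_imp_filterlim_at_right) simp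
    from filterlim_compose[OF ln_at_0 this]
    show "filterlim (\<lambda>m. X (r m) $ k) at_bot sequentially"
      by simp
  qed
qed

lemma subeigenvector_bot_limit:
  fixes T :: "real^'n \<Rightarrow> real^'n" and Z :: "nat \<Rightarrow> real^'n"
  assumes T: "topical T"
    and conv: "\<And>k. k \<in> A \<Longrightarrow> (\<lambda>m. Z m $ k) \<longlonglongrightarrow> p$k"
    and diverge: "\<And>k. k \<notin> A \<Longrightarrow> filterlim (\<lambda>m. Z m $ k) at_bot sequentially"
    and sub: "\<And>i. i \<in> A \<Longrightarrow> eventually (\<lambda>m. Z m $ i + c \<le> T (Z m) $ i) sequentially"
  shows "subeigenvector_bot T A p c"
  unfolding subeigenvector_bot_def
proof (intro ballI allI impI)
  fix i y
  assume i: "i \<in> A" and y: "\<forall>j\<in>A. p$j \<le> y$j"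
  show "p$i + c \<le> T y $ i"
  proof (rule field_le_epsilon)
    fix \<epsilon> :: real
    assume "0 < \<epsilon>"
    have "eventually (\<lambda>m. Z m $ k \<le> y$k + \<epsilon>/2) sequentially" for k
    proof (cases "k \<in> A")
      case True
      have "eventually (\<lambda>m. Z m $ k < p$k + \<epsilon>/2) sequentially"
        using order_tendstoD(2)[OF conv[OF True]] \<open>0 < \<epsilon>\<close> by simp
      then show ?thesis
        using y True by (auto elim!: eventually_mono)
    next
      case False
      then show ?thesis
        using diverge[OF False] by (simp add: filterlim_at_bot)
    qed
    then have "eventually (\<lambda>m. \<forall>k. Z m $ k \<le> y$k + \<epsilon>/2) sequentially"
      by (rule eventually_all_finite)
    moreover have "eventually (\<lambda>m. p$i - \<epsilon>/2 < Z m $ i) sequentially"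
      using order_tendstoD(1)[OF conv[OF i]] \<open>0 < \<epsilon>\<close> by simp
    moreover note sub[OF i]
    ultimately have "eventually (\<lambda>m. (\<forall>k. Z m $ k \<le> y$k + \<epsilon>/2) \<and> p$i - \<epsilon>/2 < Z m $ i \<and>
        Z m $ i + c \<le> T (Z m) $ i) sequentially"
      by eventually_elim blast
    then obtain m where m: "\<forall>k. Z m $ k \<le> y$k + \<epsilon>/2" "p$i - \<epsilon>/2 < Z m $ i"
        "Z m $ i + c \<le> T (Z m) $ i"
      using eventually_sequentially by auto
    have "T (Z m) $ i \<le> T y $ i + \<epsilon>/2"
      using m(1) by (intro topical_le_add_const[OF T]) simp
    then show "p$i + c \<le> T y $ i + \<epsilon>"
      using m(2,3) by linarith
  qed
qed

lemma ex_coordinate_not_to_bot: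
  fixes Z :: "nat \<Rightarrow> real^'n"
  assumes "\<And>m. \<exists>k\<in>K. Z m $ k = 0"
  shows "\<exists>k\<in>K. \<not> filterlim (\<lambda>m. Z m $ k) at_bot sequentially"
proof (rule ccontr)
  assume "\<not> ?thesis"
  then have "eventually (\<lambda>m. Z m $ k \<le> -1) sequentially" if "k \<in> K" for k
    using that unfolding filterlim_at_bot by blast
  then have "eventually (\<lambda>m. \<forall>k\<in>K. Z m $ k \<le> -1) sequentially"
    by (intro eventually_ball_finite) auto
  then obtain m where m: "\<forall>k\<in>K. Z m $ k \<le> -1"
    using eventually_sequentially by auto
  obtain k where "k \<in> K" "Z m $ k = 0"
    using assms by blast
  with m show False
    by force
qed

lemma truncated_subeigenvector_seq:
  fixes T :: "real^'n \<Rightarrow> real^'n"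
  assumes T: "topical T" and K: "K \<noteq> {}" and weak: "\<And>x. \<exists>i\<in>K. x$i + c \<le> T x $ i"
  obtains X :: "nat \<Rightarrow> real^'n" where "\<And>N k. k \<notin> K \<Longrightarrow> X N $ k = -(real N + 1)"
    "\<And>N k. X N $ k \<le> 0" "\<And>N. \<exists>k\<in>K. X N $ k = 0"
    "\<And>N k. k \<in> K \<Longrightarrow> -(real N + 1) < X N $ k \<Longrightarrow> X N $ k + c \<le> T (X N) $ k"
proof -
  have "\<forall>N. \<exists>x. (\<forall>k. k \<notin> K \<longrightarrow> x$k = -(real N + 1)) \<and> (\<forall>k. x$k \<le> 0) \<and> (\<exists>k\<in>K. x$k = 0) \<and>
      (\<forall>k\<in>K. -(real N + 1) < x$k \<longrightarrow> x$k + c \<le> T x $ k)"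
  proof
    fix N
    have "0 < real N + 1"
      by simp
    then obtain x M where x: "\<And>k. k \<notin> K \<Longrightarrow> x$k = -(real N + 1)" "\<And>k. -(real N + 1) \<le> x$k"
        "\<And>k. x$k \<le> 0" "\<exists>k\<in>K. x$k = 0" "\<And>k. k \<in> K \<Longrightarrow> T x $ k \<le> x$k + M"
        "\<And>k. k \<in> K \<Longrightarrow> -(real N + 1) < x$k \<Longrightarrow> T x $ k = x$k + M"
      using topical_truncated_eigenvector[OF T K] by blast
    obtain i where "i \<in> K" "x$i + c \<le> T x $ i"
      using weak by blast
    then have "c \<le> M"
      using x(5)[of i] by linarith
    then have "x$k + c \<le> T x $ k" if "k \<in> K" "-(real N + 1) < x$k" for k
      using x(6)[OF that] by linarith
    with x(1,3,4) show "\<exists>x. (\<forall>k. k \<notin> K \<longrightarrow> x$k = -(real N + 1)) \<and> (\<forall>k. x$k \<le> 0) \<and>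
        (\<exists>k\<in>K. x$k = 0) \<and> (\<forall>k\<in>K. -(real N + 1) < x$k \<longrightarrow> x$k + c \<le> T x $ k)"
      by blast
  qed
  from choice[OF this] obtain X where "\<forall>N. (\<forall>k. k \<notin> K \<longrightarrow> X N $ k = -(real N + 1)) \<and>
      (\<forall>k. X N $ k \<le> 0) \<and> (\<exists>k\<in>K. X N $ k = 0) \<and>
      (\<forall>k\<in>K. -(real N + 1) < X N $ k \<longrightarrow> X N $ k + c \<le> T (X N) $ k)"
    by blast
  then show thesis
    by (intro that) auto
qed

lemma exists_subeigenvector_bot:
  fixes T :: "real^'n \<Rightarrow> real^'n"
  assumes T: "topical T" and K: "K \<noteq> {}" and weak: "\<And>x. \<exists>i\<in>K. x$i + c \<le> T x $ i"
  obtains A p where "A \<noteq> {}" "A \<subseteq> K" "subeigenvector_bot T A p c"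
proof -
  obtain X :: "nat \<Rightarrow> real^'n" where X: "\<And>N k. k \<notin> K \<Longrightarrow> X N $ k = -(real N + 1)"
      "\<And>N k. X N $ k \<le> 0" "\<And>N. \<exists>k\<in>K. X N $ k = 0"
      "\<And>N k. k \<in> K \<Longrightarrow> -(real N + 1) < X N $ k \<Longrightarrow> X N $ k + c \<le> T (X N) $ k"
    using truncated_subeigenvector_seq[OF T K weak] by blast
  obtain r A p where r: "strict_mono r"
      and conv: "\<And>k. k \<in> A \<Longrightarrow> (\<lambda>m. X (r m) $ k) \<longlonglongrightarrow> p$k"
      and diverge: "\<And>k. k \<notin> A \<Longrightarrow> filterlim (\<lambda>m. X (r m) $ k) at_bot sequentially"
    using bounded_above_seq_coordinatewise_subseq[of X 0] X(2) by blast
  have "filterlim (\<lambda>m. 1 + real (r m)) at_top sequentially"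
    by (rule filterlim_tendsto_add_at_top[OF tendsto_const
          filterlim_compose[OF filterlim_real_sequentially filterlim_subseq[OF r]]])
  then have floor: "filterlim (\<lambda>m. -(real (r m) + 1)) at_bot sequentially"
    by (simp add: filterlim_uminus_at_top add.commute)
  have diverge': "filterlim (\<lambda>m. X (r m) $ k) at_bot sequentially" if "k \<notin> A \<inter> K" for k
    using that diverge floor X(1) by (cases "k \<in> K") auto
  have sub: "eventually (\<lambda>m. X (r m) $ i + c \<le> T (X (r m)) $ i) sequentially" if i: "i \<in> A \<inter> K" for i
  proof -
    have "eventually (\<lambda>m. p$i - 1 < X (r m) $ i) sequentially"
      using order_tendstoD(1)[OF conv] i by simp
    moreover have "eventually (\<lambda>m. -(real (r m) + 1) \<le> p$i - 1) sequentially"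
      using floor[unfolded filterlim_at_bot] by blast
    ultimately have "eventually (\<lambda>m. -(real (r m) + 1) < X (r m) $ i) sequentially"
      by eventually_elim linarith
    then show ?thesis
      by (rule eventually_mono) (use X(4) i in blast)
  qed
  obtain k where "k \<in> K" "\<not> filterlim (\<lambda>m. X (r m) $ k) at_bot sequentially"
    using ex_coordinate_not_to_bot[of K "\<lambda>m. X (r m)"] X(3) by blast
  then have "A \<inter> K \<noteq> {}"
    using diverge' by blast
  moreover have "subeigenvector_bot T (A \<inter> K) p c"
    by (rule subeigenvector_bot_limit[OF T, where Z="\<lambda>m. X (r m)"]) (use conv diverge' sub in auto)
  ultimately show thesis
    using that[of "A \<inter> K" p] by blast
qed

lemma topical_conjugate:
  assumes T: "topical T"
  shows "topical (\<lambda>x. - T (- x))"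
  unfolding topical_def
proof (intro conjI allI impI)
  fix x y :: "real^'a" and i
  assume "\<forall>i. x$i \<le> y$i"
  then have "T (- y) $ i \<le> T (- x) $ i"
    by (intro topical_mono[OF T]) simp
  then show "(- T (- x)) $ i \<le> (- T (- y)) $ i"
    by simp
next
  fix x :: "real^'a" and c :: real
  have eq: "- (\<chi> i. x$i + c) = (\<chi> i. (- x)$i + - c)"
    by (simp add: vec_eq_iff)
  show "- T (- (\<chi> i. x$i + c)) = (\<chi> i. (- T (- x)) $ i + c)"
    unfolding eq using topical_add_const[OF T, of "- x" "- c"] by (simp add: vec_eq_iff)
qed

lemma subeigenvector_bot_conjugate_iff:
  "subeigenvector_bot (\<lambda>x. - T (- x)) A p c \<longleftrightarrow> supereigenvector_top T A (- p) (- c)"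
  unfolding subeigenvector_bot_def supereigenvector_top_def
proof (intro iffI ballI allI impI)
  fix i y
  assume "\<forall>i\<in>A. \<forall>y. (\<forall>j\<in>A. p$j \<le> y$j) \<longrightarrow> p$i + c \<le> (- T (- y)) $ i"
    and "i \<in> A" "\<forall>j\<in>A. y$j \<le> (- p)$j"
  moreover have "\<forall>j\<in>A. p$j \<le> (- y)$j"
    using \<open>\<forall>j\<in>A. y$j \<le> (- p)$j\<close> by (simp add: le_minus_iff)
  ultimately have "p$i + c \<le> (- T (- (- y))) $ i"
    by blast
  then show "T y $ i \<le> (- p)$i + - c"
    by simp
next
  fix i y
  assume "\<forall>i\<in>A. \<forall>y. (\<forall>j\<in>A. y$j \<le> (- p)$j) \<longrightarrow> T y $ i \<le> (- p)$i + - c"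
    and "i \<in> A" "\<forall>j\<in>A. p$j \<le> y$j"
  moreover have "\<forall>j\<in>A. (- y)$j \<le> (- p)$j"
    using \<open>\<forall>j\<in>A. p$j \<le> y$j\<close> by simp
  ultimately have "T (- y) $ i \<le> (- p)$i + - c"
    by blast
  then show "p$i + c \<le> (- T (- y)) $ i"
    by simp
qed

lemma exists_supereigenvector_top:
  fixes T :: "real^'n \<Rightarrow> real^'n"
  assumes T: "topical T" and L: "L \<noteq> {}" and weak: "\<And>x. \<exists>i\<in>L. T x $ i \<le> x$i + c"
  obtains B q where "B \<noteq> {}" "B \<subseteq> L" "supereigenvector_top T B q c"
proof -
  have "\<exists>i\<in>L. x$i + - c \<le> (- T (- x)) $ i" for x
    using weak[of "- x"] by force
  then obtain B p where "B \<noteq> {}" "B \<subseteq> L" "subeigenvector_bot (\<lambda>x. - T (- x)) B p (- c)"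
    using exists_subeigenvector_bot[OF topical_conjugate[OF T] L] by blast
  then show thesis
    using that[of B "- p"] by (simp add: subeigenvector_bot_conjugate_iff)
qed

lemma subeigenvector_glue:
  fixes T :: "real^'n \<Rightarrow> real^'n"
  assumes T: "topical T" and u: "T u = (\<chi> i. u$i + c)" and p: "subeigenvector_bot T A p c"
    and le: "\<And>k. k \<in> A \<Longrightarrow> u$k \<le> p$k + s"
  shows "(\<chi> k. if k \<in> A then p$k + s else u$k) $ i + c \<le> T (\<chi> k. if k \<in> A then p$k + s else u$k) $ i"
    (is "?a $ i + c \<le> T ?a $ i")
proof (cases "i \<in> A")
  case True
  have "\<forall>k\<in>A. p$k \<le> (\<chi> k. ?a$k + - s) $ k"
    by simp
  then have "p$i + c \<le> T (\<chi> k. ?a$k + - s) $ i"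
    using p True unfolding subeigenvector_bot_def by blast
  with True show ?thesis
    using topical_add_const[OF T, of ?a "- s" i] by simp
next
  case False
  have "u$k + 0 \<le> ?a$k" for k
    using le[of k] by simp
  then have "T u $ i + 0 \<le> T ?a $ i"
    by (rule topical_add_const_le[OF T])
  with False u show ?thesis
    by simp
qed

lemma supereigenvector_glue:
  fixes T :: "real^'n \<Rightarrow> real^'n"
  assumes T: "topical T" and u: "T u = (\<chi> i. u$i + c)" and q: "supereigenvector_top T B q c"
    and le: "\<And>k. k \<in> B \<Longrightarrow> q$k + s \<le> u$k + s'"
  shows "T (\<chi> k. if k \<in> B then q$k + s else u$k + s') $ i \<le> (\<chi> k. if k \<in> B then q$k + s else u$k + s') $ i + c"
    (is "T ?b $ i \<le> ?b $ i + c")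
proof (cases "i \<in> B")
  case True
  have "\<forall>k\<in>B. (\<chi> k. ?b$k + - s) $ k \<le> q$k"
    by simp
  then have "T (\<chi> k. ?b$k + - s) $ i \<le> q$i + c"
    using q True unfolding supereigenvector_top_def by blast
  with True show ?thesis
    using topical_add_const[OF T, of ?b "- s" i] by simp
next
  case False
  have "?b$k \<le> u$k + s'" for k
    using le[of k] by simp
  then have "T ?b $ i \<le> T u $ i + s'"
    by (rule topical_le_add_const[OF T])
  with False u show ?thesis
    by simp
qed

lemma eigenvector_with_large_gap:
  fixes T :: "real^'n \<Rightarrow> real^'n"
  assumes T: "topical T" and u: "T u = (\<chi> i. u$i + c)"
    and p: "subeigenvector_bot T A p c" and q: "supereigenvector_top T B q c"
    and "A \<inter> B = {}" "i \<in> A" "j \<in> B"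
  obtains e where "T e = (\<chi> i. e$i + c)" "t \<le> e$i - e$j"
proof -
  define D where "D = norm p + norm q + norm u"
  have "\<bar>p$k\<bar> \<le> norm p" "\<bar>q$k\<bar> \<le> norm q" "\<bar>u$k\<bar> \<le> norm u" for k
    by (simp_all add: component_le_norm_cart)
  then have D: "-D \<le> p$k" "p$k \<le> D" "-D \<le> q$k" "q$k \<le> D" "-D \<le> u$k" "u$k \<le> D" for k
    using norm_ge_zero[of p] norm_ge_zero[of q] norm_ge_zero[of u]
    unfolding D_def abs_le_iff by (smt (verit))+
  obtain r where r: "t \<le> r" "0 \<le> r"
    using abs_ge_self abs_ge_zero by blast
  define s where "s = r + 4 * D"
  define a where "a = (\<chi> k. if k \<in> A then p$k + s else u$k)"
  define b where "b = (\<chi> k. if k \<in> B then q$k + 2 * D else u$k + (s + 2 * D))"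
  have "a$k \<le> b$k" for k
    using D[of k] \<open>A \<inter> B = {}\<close> r(2) by (auto simp: a_def b_def s_def)
  moreover have "u$l \<le> p$l + s" for l
    using D[of l] r(2) unfolding s_def by linarith
  then have "a$k + c \<le> T a $ k" for k
    unfolding a_def by (rule subeigenvector_glue[OF T u p])
  moreover have "q$l + 2 * D \<le> u$l + (s + 2 * D)" for l
    using D[of l] r(2) unfolding s_def by linarith
  then have "T b $ k \<le> b$k + c" for k
    unfolding b_def by (rule supereigenvector_glue[OF T u q])
  ultimately obtain e where e: "\<And>l. a$l \<le> e$l" "\<And>l. e$l \<le> b$l" "T e = (\<chi> i. e$i + c)"
    using topical_eigenvector_between[OF T] by blast
  have "t \<le> e$i - e$j"
    using e(1)[of i] e(2)[of j] D[of i] D[of j] \<open>i \<in> A\<close> \<open>j \<in> B\<close> r(1)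
    by (simp add: a_def b_def s_def)
  with e(3) show thesis
    by (rule that)
qed

lemma spectral_gap_if_bounded_eigenvectors:
  fixes T :: "real^'n \<Rightarrow> real^'n"
  assumes T: "topical T" and u: "T u = (\<chi> i. u$i + c)"
    and bounded: "\<And>x. x \<in> additive_eigenvectors T \<Longrightarrow> var_norm x \<le> C"
    and J: "J \<noteq> {}" "J \<noteq> UNIV"
  shows "r_upper (T_bot J T) < lambda_lower (T_top (UNIV - J) T)"
proof (rule ccontr)
  assume "\<not> ?thesis"
  then have gap: "lambda_lower (T_top (UNIV - J) T) \<le> r_upper (T_bot J T)"
    by simp
  have "ereal c \<le> r_upper (T_bot J T)"
    using eigenvalue_le_lambda_lower_T_top[where T = T, OF u] gap by (rule order_trans)
  then have "\<exists>i\<in>J. x$i + c \<le> T x $ i" for x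
    by (rule r_upper_T_bot_geD)
  then obtain A p where A: "A \<noteq> {}" "A \<subseteq> J" "subeigenvector_bot T A p c"
    by (rule exists_subeigenvector_bot[OF T J(1)])
  have "lambda_lower (T_top (UNIV - J) T) \<le> ereal c"
    using gap r_upper_T_bot_le_eigenvalue[where T = T, OF u] by (rule order_trans)
  then have weak: "\<exists>i\<in>UNIV - J. T x $ i \<le> x$i + c" for x
    by (rule lambda_lower_T_top_leD)
  have "UNIV - J \<noteq> {}"
    using J(2) by blast
  then obtain B q where B: "B \<noteq> {}" "B \<subseteq> UNIV - J" "supereigenvector_top T B q c"
    using weak by (rule exists_supereigenvector_top[OF T])
  obtain i j where i: "i \<in> A" and j: "j \<in> B"
    using A(1) B(1) by blast
  have "A \<inter> B = {}"
    using A(2) B(2) by blast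
  then obtain e where "T e = (\<chi> i. e$i + c)" "C + 1 \<le> e$i - e$j"
    using i j by (rule eigenvector_with_large_gap[OF T u A(3) B(3)])
  then have "e \<in> additive_eigenvectors T"
    unfolding additive_eigenvectors_def by blast
  with \<open>C + 1 \<le> e$i - e$j\<close> show False
    using bounded var_norm_ge[of e i j] by force
qed

theorem theorem7p4:
  fixes T :: "real^'n \<Rightarrow> real^'n"
  assumes "topical T"
  shows "(additive_eigenvectors T \<noteq> {} \<and>
          (\<exists>C. \<forall>x\<in>additive_eigenvectors T. var_norm x \<le> C)) \<longleftrightarrow>
         (\<forall>J::'n set. J \<noteq> {} \<and> J \<noteq> UNIV \<longrightarrow>
            r_upper (T_bot J T) < lambda_lower (T_top (UNIV - J) T))"
proof
  assume "additive_eigenvectors T \<noteq> {} \<and> (\<exists>C. \<forall>x\<in>additive_eigenvectors T. var_norm x \<le> C)"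
  then obtain u C where "u \<in> additive_eigenvectors T" and bounded: "\<forall>x\<in>additive_eigenvectors T. var_norm x \<le> C"
    by blast
  then obtain c where u: "T u = (\<chi> i. u$i + c)"
    unfolding additive_eigenvectors_def by blast
  show "\<forall>J. J \<noteq> {} \<and> J \<noteq> UNIV \<longrightarrow> r_upper (T_bot J T) < lambda_lower (T_top (UNIV - J) T)"
    using bounded by (auto intro: spectral_gap_if_bounded_eigenvectors[OF assms u])
next
  assume "\<forall>J. J \<noteq> {} \<and> J \<noteq> UNIV \<longrightarrow> r_upper (T_bot J T) < lambda_lower (T_top (UNIV - J) T)"
  then show "additive_eigenvectors T \<noteq> {} \<and> (\<exists>C. \<forall>x\<in>additive_eigenvectors T. var_norm x \<le> C)"
    by (intro bounded_eigenvectors_if_spectral_gaps[OF assms]) simp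
qed

end
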